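(* Let $f$, $Q$, $L$, $d_Q$ and $T\in\mathbb{N}_0$ be as in the context, and let the sequences $(x_t)_{t=0}^{T+1}$, $(u_t)_{t=0}^{T+1}$, $(z_t)_{t=0}^{T}$, $(\hat x_t)_{t=1}^{T+1}$, $(\gamma_t)_{t=0}^{T+1}$, $(\Gamma_t)_{t=0}^{T+1}$, $(\tau_t)_{t=0}^{T}$, $(L_t)_{t=0}^{T}$ be generated by the algorithm described in the context. Then for every $0\le t\le T$, \[ \Gamma_t f(u_t)+\sum_{k=0}^{t-1}(L_{k+1}-L_k)\Big(d_Q(z_{k+1})-\tfrac12\|z_k-\hat x_{k+1}\|^2\Big)\le \psi_t, \] where \[ \psi_t:=\min_{x\in Q}\Big\{\sum_{k=0}^{t}\gamma_k\big(f(x_k)+\langle\nabla f(x_k),x-x_k\rangle\big)+L_t d_Q(x)\Big\}. \]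
   Context: $\mathbb{R}^n$ carries the standard scalar product $\langle\cdot,\cdot\rangle$ and a (possibly different) norm $\|\cdot\|$, with dual norm $\|u\|_*=\max\{\langle u,x\rangle:\|x\|=1\}$. $Q\subseteq\mathbb{R}^n$ is closed and convex; $f:\mathbb{R}^n\to\mathbb{R}$ is convex, differentiable, attains its minimum on $Q$, and $L>0$ satisfies $\|\nabla f(x)-\nabla f(y)\|_*\le L\|x-y\|$ for all $x,y\in Q$. A distance-generating function for $Q$ is $d_Q:Q\to\mathbb{R}_{\ge0}$ that is continuous on $Q$, strongly convex with modulus 1 w.r.t. $\|\cdot\|$ (i.e. $d_Q(\lambda x+(1-\lambda)y)+\frac{\lambda(1-\lambda)}2\|x-y\|^2\le\lambda d_Q(x)+(1-\lambda)d_Q(y)$ for $x,y\in Q$, $\lambda\in[0,1]$), and whose subdifferential admits a continuous selection $d_Q'$ on $Q^o:=\{x\in Q:\partial d_Q(x)\neq\emptyset\}$. For $z\in Q^o$, the Bregman distance is $V_z(x)=d_Q(x)-d_Q(z)-\langle d_Q'(z),x-z\rangle$, and the prox-mapping is $\mathrm{Prox}_{Q,z}(s)=\arg\min_{x\in Q}\{\langle s,x-z\rangle+V_z(x)\}$ (a unique minimizer, lying in $Q^o$). The $d_Q$-center is $c(d_Q)=\arg\min_{x\in Q}d_Q(x)$, and it is assumed that $d_Q(c(d_Q))=0$. Algorithm: choose $T\in\mathbb{N}_0$ and numbers $(\gamma_t)_{t=0}^{T+1}$ with $\gamma_0\in(0,1]$, $\gamma_t\ge0$ and $\gamma_t^2\le\Gamma_t:=\sum_{k=0}^t\gamma_k$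 for all $0\le t\le T+1$. Set $L_0=L$, $x_0=c(d_Q)$, $u_0=\arg\min_{x\in Q}\{\gamma_0(f(x_0)+\langle\nabla f(x_0),x-x_0\rangle)+L_0d_Q(x)\}$, $z_0=u_0$, $\tau_0=\gamma_1/\Gamma_1$, $x_1=\tau_0z_0+(1-\tau_0)u_0(=z_0)$, $\hat x_1=\mathrm{Prox}_{Q,z_0}(\gamma_1\nabla f(x_1)/L_0)$, $u_1=\tau_0\hat x_1+(1-\tau_0)u_0$. For $t=1,\dots,T$: choose $0<L_t\le L$ with $f(u_t)\le f(x_t)+\langle\nabla f(x_t),u_t-x_t\rangle+\frac{L_t}{2}\|u_t-x_t\|^2$; set $z_t=\arg\min_{x\in Q}\{\sum_{k=0}^t\gamma_k(f(x_k)+\langle\nabla f(x_k),x-x_k\rangle)+L_td_Q(x)\}$; set $\tau_t=\gamma_{t+1}/\Gamma_{t+1}$ and $x_{t+1}=\tau_tz_t+(1-\tau_t)u_t$; set $\hat x_{t+1}=\mathrm{Prox}_{Q,z_t}(\gamma_{t+1}\nabla f(x_{t+1})/L_t)$; set $u_{t+1}=\tau_t\hat x_{t+1}+(1-\tau_t)u_t$. *)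

theory Defs
  imports "HOL-Analysis.Analysis"
begin

definition is_norm :: "('a::real_vector \<Rightarrow> real) \<Rightarrow> bool" where
  "is_norm N \<longleftrightarrow> (\<forall>x. N x = 0 \<longleftrightarrow> x = 0) \<and> (\<forall>c x. N (c *\<^sub>R x) = \<bar>c\<bar> * N x)
     \<and> (\<forall>x y. N (x + y) \<le> N x + N y)"

definition dual_norm :: "('a::real_inner \<Rightarrow> real) \<Rightarrow> 'a \<Rightarrow> real" where
  "dual_norm N u = Sup {u \<bullet> x | x. N x = 1}"

definition strongly_convex_1 :: "('a::real_vector \<Rightarrow> real) \<Rightarrow> 'a set \<Rightarrow> ('a \<Rightarrow> real) \<Rightarrow> bool" where
  "strongly_convex_1 N Q d \<longleftrightarrow> (\<forall>x\<in>Q. \<forall>y\<in>Q. \<forall>lam::real. 0 \<le> lam \<longrightarrow> lam \<le> 1 \<longrightarrow>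
      d (lam *\<^sub>R x + (1 - lam) *\<^sub>R y) + lam * (1 - lam) / 2 * (N (x - y))\<^sup>2
        \<le> lam * d x + (1 - lam) * d y)"

text \<open>Subdifferential of d regarded as a function on Q (i.e. +infinity outside Q).\<close>
definition subdiff_on :: "'a set \<Rightarrow> ('a::real_inner \<Rightarrow> real) \<Rightarrow> 'a \<Rightarrow> 'a set" where
  "subdiff_on Q d x = {s. \<forall>y\<in>Q. d x + s \<bullet> (y - x) \<le> d y}"

definition subdiff_dom :: "'a set \<Rightarrow> ('a::real_inner \<Rightarrow> real) \<Rightarrow> 'a set" where
  "subdiff_dom Q d = {x\<in>Q. subdiff_on Q d x \<noteq> {}}"

definition dist_gen_fun :: "('a::real_inner \<Rightarrow> real) \<Rightarrow> 'a set \<Rightarrow> ('a \<Rightarrow> real) \<Rightarrow> ('a \<Rightarrow> 'a) \<Rightarrow> bool" where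
  "dist_gen_fun N Q d d' \<longleftrightarrow> (\<forall>x\<in>Q. 0 \<le> d x) \<and> continuous_on Q d \<and> strongly_convex_1 N Q d
     \<and> (\<forall>x\<in>subdiff_dom Q d. d' x \<in> subdiff_on Q d x) \<and> continuous_on (subdiff_dom Q d) d'"

definition bregman :: "('a::real_inner \<Rightarrow> real) \<Rightarrow> ('a \<Rightarrow> 'a) \<Rightarrow> 'a \<Rightarrow> 'a \<Rightarrow> real" where
  "bregman d d' z x = d x - d z - d' z \<bullet> (x - z)"

definition is_prox :: "'a set \<Rightarrow> ('a::real_inner \<Rightarrow> real) \<Rightarrow> ('a \<Rightarrow> 'a) \<Rightarrow> 'a \<Rightarrow> 'a \<Rightarrow> 'a \<Rightarrow> bool" where
  "is_prox Q d d' z s p \<longleftrightarrow> is_arg_min (\<lambda>x. s \<bullet> (x - z) + bregman d d' z x) (\<lambda>x. x \<in> Q) p"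

definition lin_model :: "('a::real_inner \<Rightarrow> real) \<Rightarrow> ('a \<Rightarrow> 'a) \<Rightarrow> (nat \<Rightarrow> real) \<Rightarrow> (nat \<Rightarrow> 'a) \<Rightarrow> nat \<Rightarrow> 'a \<Rightarrow> real" where
  "lin_model f g \<gamma> x t y = (\<Sum>k\<le>t. \<gamma> k * (f (x k) + g (x k) \<bullet> (y - x k)))"

end

theory Submission
  imports Defs
begin

(*
  Induction on t: Gamma_t f(u_t) plus the correction sum stays below psi_t(z_t), the minimum of the
  model psi_t.  In the step, the descent condition at u_(t+1), where
  u_(t+1) - x_(t+1) = tau_t (xh_(t+1) - z_t) and gamma_(t+1)^2 <= Gamma_(t+1), together with
  convexity of f at x_(t+1), bounds Gamma_(t+1) f(u_(t+1)) by Gamma_t f(u_t), the new linear term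
  gamma_(t+1) (f(x_(t+1)) + <grad f(x_(t+1)), xh_(t+1) - x_(t+1)>) and L_(t+1)/2 |z_t - xh_(t+1)|^2.
  The three-point inequality of the prox step from the minimiser z_t of psi_t shows that
  psi_(t+1)(z_(t+1)) exceeds psi_t(z_t) by at least the same linear term, L_t/2 |z_t - xh_(t+1)|^2
  and (L_(t+1) - L_t) d(z_(t+1)).

  The delicate point is that the Bregman distance is built from the selection d'(z_t), whereas
  optimality of z_t only provides some subgradient of d at z_t.  Continuity of d' and density of
  the points where d is subdifferentiable (minimisers of d plus a steep quadratic) show that
  d'(z_t) satisfies the same first-order condition.
*)

lemma is_norm_zero: "is_norm N \<Longrightarrow> N 0 = 0"
  by (simp add: is_norm_def)

lemma is_norm_scaleR: "is_norm N \<Longrightarrow> N (c *\<^sub>R x) = \<bar>c\<bar> * N x"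
  by (simp add: is_norm_def)

lemma is_norm_triangle: "is_norm N \<Longrightarrow> N (x + y) \<le> N x + N y"
  by (simp add: is_norm_def)

lemma is_norm_minus_commute: "is_norm N \<Longrightarrow> N (x - y) = N (y - x)"
  using is_norm_scaleR[of N "-1" "x - y"] by simp

lemma is_norm_nonneg: "is_norm N \<Longrightarrow> 0 \<le> N x"
  using is_norm_triangle[of N x "-x"] is_norm_zero[of N] is_norm_minus_commute[of N 0 x] by simp

lemma is_norm_pos: "is_norm N \<Longrightarrow> x \<noteq> 0 \<Longrightarrow> 0 < N x"
  using is_norm_nonneg[of N x] by (auto simp: is_norm_def)

lemma is_norm_sum: "is_norm N \<Longrightarrow> N (sum h A) \<le> (\<Sum>a\<in>A. N (h a))"
proof (induction A rule: infinite_finite_induct)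
  case (insert a A)
  then show ?case using is_norm_triangle[OF insert.prems, of "h a" "sum h A"] by simp
qed (simp_all add: is_norm_zero)

lemma is_norm_le_norm:
  fixes N :: "'a::euclidean_space \<Rightarrow> real"
  assumes n: "is_norm N"
  shows "N x \<le> (\<Sum>b\<in>Basis. N b) * norm x"
proof -
  have "N x = N (\<Sum>b\<in>Basis. (x \<bullet> b) *\<^sub>R b)" by (simp add: euclidean_representation)
  also have "\<dots> \<le> (\<Sum>b\<in>Basis. N ((x \<bullet> b) *\<^sub>R b))" by (rule is_norm_sum[OF n])
  also have "\<dots> = (\<Sum>b\<in>Basis. \<bar>x \<bullet> b\<bar> * N b)" by (simp add: is_norm_scaleR[OF n])
  also have "\<dots> \<le> (\<Sum>b\<in>Basis. norm x * N b)"
    by (intro sum_mono mult_right_mono Basis_le_norm is_norm_nonneg[OF n])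
  finally show ?thesis by (simp add: sum_distrib_left mult.commute)
qed

lemma continuous_on_is_norm:
  fixes N :: "'a::euclidean_space \<Rightarrow> real"
  assumes n: "is_norm N"
  shows "continuous_on S N"
proof (rule lipschitz_on_continuous_on)
  show "(\<Sum>b\<in>Basis. N b)-lipschitz_on S N"
  proof (rule lipschitz_onI)
    fix x y
    have "N x \<le> N y + N (x - y)" "N y \<le> N x + N (y - x)"
      using is_norm_triangle[OF n, of y "x - y"] is_norm_triangle[OF n, of x "y - x"] by simp_all
    then have "\<bar>N x - N y\<bar> \<le> N (x - y)" using is_norm_minus_commute[OF n, of x y] by linarith
    also have "\<dots> \<le> (\<Sum>b\<in>Basis. N b) * norm (x - y)" by (rule is_norm_le_norm[OF n])
    finally show "dist (N x) (N y) \<le> (\<Sum>b\<in>Basis. N b) * dist x y" by (simp add: dist_norm dist_real_def)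
  qed (intro sum_nonneg is_norm_nonneg[OF n])
qed

lemma is_norm_ge_norm:
  fixes N :: "'a::euclidean_space \<Rightarrow> real"
  assumes n: "is_norm N"
  obtains m where "m > 0" "\<And>x. m * norm x \<le> N x"
proof -
  obtain b :: 'a where "b \<in> Basis" using nonempty_Basis by blast
  then have "sphere 0 1 \<noteq> ({} :: 'a set)" by (auto simp: norm_Basis intro!: exI[of _ b])
  then obtain y where y: "y \<in> sphere (0::'a) 1" and ymin: "\<And>w. w \<in> sphere 0 1 \<Longrightarrow> N y \<le> N w"
    using continuous_attains_inf[OF compact_sphere _ continuous_on_is_norm[OF n]] by blast
  have "N y * norm x \<le> N x" for x
  proof (cases "x = 0")
    case False
    then have "N y \<le> N ((1 / norm x) *\<^sub>R x)" by (intro ymin) simp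
    also have "\<dots> = N x / norm x" using is_norm_scaleR[OF n] by simp
    finally show ?thesis using False by (simp add: field_simps)
  qed (simp add: is_norm_zero[OF n])
  moreover have "0 < N y" using y by (intro is_norm_pos[OF n]) auto
  ultimately show ?thesis using that by blast
qed

lemma dual_norm_inner_le:
  fixes N :: "'a::euclidean_space \<Rightarrow> real"
  assumes n: "is_norm N"
  shows "u \<bullet> h \<le> dual_norm N u * N h"
proof (cases "h = 0")
  case False
  obtain m where m: "m > 0" "\<And>x. m * norm x \<le> N x" using is_norm_ge_norm[OF n] by blast
  have bdd: "bdd_above {u \<bullet> x | x. N x = 1}"
  proof (rule bdd_aboveI)
    fix r assume "r \<in> {u \<bullet> x | x. N x = 1}"
    then obtain x where x: "r = u \<bullet> x" "N x = 1" by blast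
    have "norm x \<le> 1 / m" using m(1) m(2)[of x] x(2) by (simp add: field_simps)
    then have "norm u * norm x \<le> norm u / m" by (simp add: mult_left_mono divide_inverse)
    then show "r \<le> norm u / m" using x(1) norm_cauchy_schwarz[of u x] by linarith
  qed
  have pos: "0 < N h" by (rule is_norm_pos[OF n False])
  then have "N ((1 / N h) *\<^sub>R h) = 1" using is_norm_scaleR[OF n] by simp
  then have "u \<bullet> ((1 / N h) *\<^sub>R h) \<le> dual_norm N u"
    unfolding dual_norm_def by (blast intro: cSup_upper[OF _ bdd])
  then show ?thesis using pos by (simp add: field_simps)
qed (simp add: is_norm_zero[OF n])

lemma has_real_derivative_along_line:
  fixes f :: "'a::real_inner \<Rightarrow> real"
  assumes grad: "\<And>y. (f has_derivative (\<lambda>h. g y \<bullet> h)) (at y)"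
  shows "((\<lambda>s. f (y + s *\<^sub>R h)) has_real_derivative (g (y + s *\<^sub>R h) \<bullet> h)) (at s)"
proof -
  have "((\<lambda>s. y + s *\<^sub>R h) has_derivative (\<lambda>t. t *\<^sub>R h)) (at s)"
    by (auto intro!: derivative_eq_intros)
  from has_derivative_compose[OF this grad]
  show ?thesis by (simp add: has_field_derivative_def mult_commute_abs)
qed

lemma convex_on_gradient_le:
  fixes f :: "'a::real_inner \<Rightarrow> real"
  assumes conv: "convex_on UNIV f"
    and grad: "\<And>y. (f has_derivative (\<lambda>h. g y \<bullet> h)) (at y)"
  shows "f y + g y \<bullet> (w - y) \<le> f w"
proof -
  let ?p = "\<lambda>s::real. f (y + s *\<^sub>R (w - y))"
  have "convex_on UNIV ?p"
  proof (rule convex_onI)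
    fix t a b :: real
    have "y + ((1 - t) *\<^sub>R a + t *\<^sub>R b) *\<^sub>R (w - y)
        = (1 - t) *\<^sub>R (y + a *\<^sub>R (w - y)) + t *\<^sub>R (y + b *\<^sub>R (w - y))"
      by (simp add: algebra_simps)
    moreover assume "0 < t" "t < 1"
    ultimately show "?p ((1 - t) *\<^sub>R a + t *\<^sub>R b) \<le> (1 - t) * ?p a + t * ?p b"
      using convex_onD[OF conv, of t] by simp
  qed simp
  moreover have "(?p has_real_derivative (g y \<bullet> (w - y))) (at 0 within UNIV)"
    using has_real_derivative_along_line[OF grad, of y "w - y" 0] by simp
  ultimately have "?p 1 - ?p 0 \<ge> (g y \<bullet> (w - y)) * (1 - 0)"
    by (intro convex_on_imp_above_tangent) auto
  then show ?thesis by simp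
qed

lemma lipschitz_gradient_upper_bound:
  fixes f :: "'a::euclidean_space \<Rightarrow> real"
  assumes n: "is_norm N" and "convex Q"
    and grad: "\<And>y. (f has_derivative (\<lambda>h. g y \<bullet> h)) (at y)"
    and lip: "\<And>y w. y \<in> Q \<Longrightarrow> w \<in> Q \<Longrightarrow> dual_norm N (g y - g w) \<le> L * N (y - w)"
    and yQ: "y \<in> Q" and wQ: "w \<in> Q"
  shows "f w \<le> f y + g y \<bullet> (w - y) + L / 2 * (N (w - y))\<^sup>2"
proof -
  let ?h = "w - y"
  let ?p = "\<lambda>s. f (y + s *\<^sub>R ?h) - s * (g y \<bullet> ?h) - L * s\<^sup>2 / 2 * (N ?h)\<^sup>2"
  have "?p 1 \<le> ?p 0"
  proof (rule DERIV_nonpos_imp_nonincreasing[of 0 1 ?p])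
    fix s :: real assume s: "0 \<le> s" "s \<le> 1"
    let ?q = "y + s *\<^sub>R ?h"
    have "(?p has_real_derivative (g ?q - g y) \<bullet> ?h - L * s * (N ?h)\<^sup>2) (at s)"
      using has_real_derivative_along_line[OF grad, of y ?h s]
      by (auto intro!: derivative_eq_intros simp: inner_diff_left power2_eq_square)
    moreover have "?q = (1 - s) *\<^sub>R y + s *\<^sub>R w" by (simp add: algebra_simps)
    then have "?q \<in> Q" using \<open>convex Q\<close> yQ wQ s by (simp add: convex_alt)
    then have "(g ?q - g y) \<bullet> ?h \<le> L * N (?q - y) * N ?h"
      using dual_norm_inner_le[OF n] lip[OF _ yQ] is_norm_nonneg[OF n]
      by (meson mult_right_mono order_trans)
    moreover have "N (?q - y) = s * N ?h" using is_norm_scaleR[OF n, of s ?h] s by simp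
    ultimately show "\<exists>D. (?p has_real_derivative D) (at s) \<and> D \<le> 0"
      by (auto simp: power2_eq_square mult_ac)
  qed simp
  then show ?thesis by simp
qed

lemma strongly_convex_1D:
  assumes "strongly_convex_1 N Q d" "x \<in> Q" "y \<in> Q" "0 \<le> l" "l \<le> 1"
  shows "d (l *\<^sub>R x + (1 - l) *\<^sub>R y) + l * (1 - l) / 2 * (N (x - y))\<^sup>2 \<le> l * d x + (1 - l) * d y"
  using assms unfolding strongly_convex_1_def by blast

lemma strongly_convex_1_imp_convex_on:
  assumes sc: "strongly_convex_1 N Q d" and "convex Q"
  shows "convex_on Q d"
proof (rule convex_onI)
  fix t :: real and x y assume t: "0 < t" "t < 1" and xy: "x \<in> Q" "y \<in> Q"
  have "d (t *\<^sub>R y + (1 - t) *\<^sub>R x) + t * (1 - t) / 2 * (N (y - x))\<^sup>2 \<le> t * d y + (1 - t) * d x"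
    using strongly_convex_1D[OF sc xy(2,1)] t by simp
  moreover have "0 \<le> t * (1 - t) / 2 * (N (y - x))\<^sup>2" using t by simp
  ultimately show "d ((1 - t) *\<^sub>R x + t *\<^sub>R y) \<le> (1 - t) * d x + t * d y"
    by (simp add: add.commute)
qed fact

lemma strongly_convex_1_subgradient_growth:
  assumes sc: "strongly_convex_1 N Q d" and "convex Q"
    and s: "s \<in> subdiff_on Q d z" and zQ: "z \<in> Q" and yQ: "y \<in> Q"
  shows "d z + s \<bullet> (y - z) + 1/2 * (N (y - z))\<^sup>2 \<le> d y"
proof -
  have "1/2 * (N (y - z))\<^sup>2 \<le> d y - d z - s \<bullet> (y - z)"
  proof (rule field_le_mult_one_interval)
    fix m :: real assume m: "0 < m" "m < 1"
    define l where "l = 1 - m"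
    let ?p = "l *\<^sub>R y + (1 - l) *\<^sub>R z"
    have l: "0 < l" "l \<le> 1" and m_eq: "m = 1 - l" using m by (auto simp: l_def)
    have "?p \<in> Q" using \<open>convex Q\<close> yQ zQ l by (simp add: convex_def)
    then have "d z + s \<bullet> (?p - z) \<le> d ?p" using s by (simp add: subdiff_on_def)
    moreover have "?p - z = l *\<^sub>R (y - z)" by (simp add: algebra_simps)
    moreover have "d ?p + l * (1 - l) / 2 * (N (y - z))\<^sup>2 \<le> l * d y + (1 - l) * d z"
      using l by (intro strongly_convex_1D[OF sc yQ zQ]) auto
    ultimately have "l * ((1 - l) * (1/2 * (N (y - z))\<^sup>2)) \<le> l * (d y - d z - s \<bullet> (y - z))"
      by (simp add: algebra_simps)
    then show "m * (1/2 * (N (y - z))\<^sup>2) \<le> d y - d z - s \<bullet> (y - z)"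
      using l by (simp add: m_eq)
  qed
  then show ?thesis by simp
qed

lemma subdiff_on_monotone:
  assumes "s \<in> subdiff_on Q d z" "s' \<in> subdiff_on Q d w" "z \<in> Q" "w \<in> Q"
  shows "0 \<le> (s' - s) \<bullet> (w - z)"
proof -
  have "d z + s \<bullet> (w - z) \<le> d w" "d w + s' \<bullet> (z - w) \<le> d z"
    using assms by (simp_all add: subdiff_on_def)
  then show ?thesis by (simp add: inner_diff_left inner_diff_right)
qed

lemma nonneg_if_nonneg_plus_small_multiples:
  fixes A C :: real
  assumes "\<And>l. 0 < l \<Longrightarrow> l \<le> 1 \<Longrightarrow> 0 \<le> A + l * C"
  shows "0 \<le> A"
proof (rule tendsto_lowerbound)
  show "((\<lambda>l. A + l * C) \<longlongrightarrow> A) (at_right 0)"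
    by (auto intro!: tendsto_eq_intros)
  show "\<forall>\<^sub>F l in at_right 0. 0 \<le> A + l * C"
    using eventually_at_right_real[OF zero_less_one] by eventually_elim (use assms in auto)
qed simp

lemma subdiff_on_of_quadratic_perturbation_min:
  fixes d :: "'a::real_inner \<Rightarrow> real"
  assumes conv: "convex_on Q d" and wQ: "w \<in> Q"
    and min: "\<And>y. y \<in> Q \<Longrightarrow> d w + K / 2 * (norm (w - p))\<^sup>2 \<le> d y + K / 2 * (norm (y - p))\<^sup>2"
  shows "K *\<^sub>R (p - w) \<in> subdiff_on Q d w"
  unfolding subdiff_on_def
proof (intro CollectI ballI)
  fix y assume yQ: "y \<in> Q"
  have "0 \<le> d y - d w + K * ((w - p) \<bullet> (y - w))"
  proof (rule nonneg_if_nonneg_plus_small_multiples)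
    fix l :: real assume l: "0 < l" "l \<le> 1"
    let ?q = "(1 - l) *\<^sub>R w + l *\<^sub>R y"
    have "(norm (a + l *\<^sub>R b))\<^sup>2 = (norm a)\<^sup>2 + 2 * l * (a \<bullet> b) + l\<^sup>2 * (norm b)\<^sup>2" for a b :: 'a
      unfolding power2_norm_eq_inner by (simp add: inner_add_left inner_add_right inner_commute power2_eq_square
          algebra_simps)
    moreover have "?q - p = (w - p) + l *\<^sub>R (y - w)" by (simp add: algebra_simps)
    ultimately have sq: "(norm (?q - p))\<^sup>2 = (norm (w - p))\<^sup>2 + 2 * l * ((w - p) \<bullet> (y - w)) + l\<^sup>2 * (norm (y - w))\<^sup>2"
      by (simp only:)
    have "?q \<in> Q" using convex_on_imp_convex[OF conv] wQ yQ l by (simp add: convex_alt add.commute)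
    then have "d w + K / 2 * (norm (w - p))\<^sup>2 \<le> d ?q + K / 2 * (norm (?q - p))\<^sup>2" by (rule min)
    moreover have "d ?q \<le> (1 - l) * d w + l * d y" using convex_onD[OF conv] wQ yQ l by simp
    ultimately have "0 \<le> l * (d y - d w + K * ((w - p) \<bullet> (y - w)) + l * (K / 2 * (norm (y - w))\<^sup>2))"
      unfolding sq by (simp add: algebra_simps power2_eq_square)
    then show "0 \<le> d y - d w + K * ((w - p) \<bullet> (y - w)) + l * (K / 2 * (norm (y - w))\<^sup>2)"
      using l by (simp add: zero_le_mult_iff)
  qed
  then show "d w + K *\<^sub>R (p - w) \<bullet> (y - w) \<le> d y" by (simp add: inner_diff_left algebra_simps)
qed

lemma subdiff_dom_dense:
  fixes d :: "'a::euclidean_space \<Rightarrow> real"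
  assumes "closed Q" and conv: "convex_on Q d" and cont: "continuous_on Q d"
    and nonneg: "\<And>x. x \<in> Q \<Longrightarrow> 0 \<le> d x" and pQ: "p \<in> Q" and "0 < \<epsilon>"
  shows "\<exists>w\<in>subdiff_dom Q d. dist w p < \<epsilon>"
proof -
  define r where "r = \<epsilon> / 2"
  \<comment> \<open>\<open>K\<close> is steep enough that the penalised minimiser over \<open>Q\<close> cannot leave \<open>cball p r\<close>.\<close>
  define K where "K = 2 * (d p + 1) / r\<^sup>2"
  define \<phi> where "\<phi> y = d y + K / 2 * (norm (y - p))\<^sup>2" for y
  have r: "0 < r" "r < \<epsilon>" using \<open>0 < \<epsilon>\<close> by (auto simp: r_def)
  have "compact (Q \<inter> cball p r)" by (intro closed_Int_compact \<open>closed Q\<close> compact_cball)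
  moreover have "Q \<inter> cball p r \<noteq> {}" using pQ r by auto
  moreover have "continuous_on (Q \<inter> cball p r) \<phi>"
    unfolding \<phi>_def by (intro continuous_intros continuous_on_subset[OF cont]) auto
  ultimately have "\<exists>w\<in>Q \<inter> cball p r. \<forall>y\<in>Q \<inter> cball p r. \<phi> w \<le> \<phi> y"
    by (rule continuous_attains_inf)
  then obtain w where w: "w \<in> Q \<inter> cball p r" and wmin: "\<And>y. y \<in> Q \<inter> cball p r \<Longrightarrow> \<phi> w \<le> \<phi> y"
    by blast
  have "\<phi> w \<le> \<phi> y" if yQ: "y \<in> Q" for y
  proof (cases "y \<in> cball p r")
    case False
    then have "r\<^sup>2 < (norm (y - p))\<^sup>2" using r by (intro power_strict_mono) (auto simp: dist_norm norm_minus_commute)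
    moreover have "0 < K" using nonneg[OF pQ] r by (simp add: K_def)
    ultimately have "K / 2 * r\<^sup>2 < K / 2 * (norm (y - p))\<^sup>2" by simp
    moreover have "K / 2 * r\<^sup>2 = d p + 1" using r by (simp add: K_def)
    moreover have "\<phi> w \<le> d p" using wmin[of p] pQ r by (simp add: \<phi>_def)
    ultimately show ?thesis using nonneg[OF yQ] by (simp add: \<phi>_def)
  qed (use wmin yQ in auto)
  then have "K *\<^sub>R (p - w) \<in> subdiff_on Q d w"
    using w by (intro subdiff_on_of_quadratic_perturbation_min[OF conv]) (auto simp: \<phi>_def)
  then show ?thesis using w r by (auto simp: subdiff_dom_def dist_commute intro!: bexI[of _ w])
qed

lemma subdiff_dom_tangent_sequence:
  fixes d :: "'a::euclidean_space \<Rightarrow> real"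
  assumes "closed Q" and conv: "convex_on Q d" and cont: "continuous_on Q d"
    and nonneg: "\<And>x. x \<in> Q \<Longrightarrow> 0 \<le> d x" and zQ: "z \<in> Q" and yQ: "y \<in> Q"
  obtains w :: "nat \<Rightarrow> 'a" and t :: "nat \<Rightarrow> real"
  where "\<And>n. w n \<in> subdiff_dom Q d" "\<And>n. 0 < t n" "t \<longlonglongrightarrow> 0"
    "(\<lambda>n. inverse (t n) *\<^sub>R (w n - z)) \<longlonglongrightarrow> y - z"
proof -
  define t :: "nat \<Rightarrow> real" where "t n = inverse (real (Suc n))" for n
  have t: "0 < t n" "t n \<le> 1" for n by (auto simp: t_def field_simps)
  have "z + t n *\<^sub>R (y - z) \<in> Q" for n
    using convex_on_imp_convex[OF conv] zQ yQ t[of n] by (simp add: convex_alt algebra_simps)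
  then have "\<exists>w\<in>subdiff_dom Q d. dist w (z + t n *\<^sub>R (y - z)) < (t n)\<^sup>2" for n
    using subdiff_dom_dense[OF \<open>closed Q\<close> conv cont nonneg] t[of n] by simp
  then obtain w where w: "\<And>n. w n \<in> subdiff_dom Q d"
    and close: "\<And>n. dist (w n) (z + t n *\<^sub>R (y - z)) < (t n)\<^sup>2"
    by metis
  have t0: "t \<longlonglongrightarrow> 0" unfolding t_def by (rule LIMSEQ_inverse_real_of_nat)
  have "(\<lambda>n. inverse (t n) *\<^sub>R (w n - z) - (y - z)) \<longlonglongrightarrow> 0"
  proof (rule Lim_null_comparison[OF _ t0], intro always_eventually allI)
    fix n
    have "inverse (t n) *\<^sub>R (w n - z) - (y - z) = inverse (t n) *\<^sub>R (w n - (z + t n *\<^sub>R (y - z)))"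
      using t[of n] by (simp add: algebra_simps)
    then have "norm (inverse (t n) *\<^sub>R (w n - z) - (y - z)) = dist (w n) (z + t n *\<^sub>R (y - z)) / t n"
      using t[of n] by (simp add: dist_norm divide_inverse mult.commute)
    also have "\<dots> \<le> t n" using close[of n] t[of n] by (simp add: divide_le_eq power2_eq_square)
    finally show "norm (inverse (t n) *\<^sub>R (w n - z) - (y - z)) \<le> t n" .
  qed
  then have "(\<lambda>n. inverse (t n) *\<^sub>R (w n - z)) \<longlonglongrightarrow> y - z" by (rule LIM_zero_cancel)
  with w t(1) t0 show thesis by (rule that)
qed

text \<open>Monotonicity of the subdifferential, applied along a sequence in \<open>subdiff_dom Q d\<close> approaching
  \<open>z\<close> from the direction \<open>y - z\<close>, passes to the limit by continuity of the selection \<open>d'\<close>.\<close>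
lemma dist_gen_fun_selection_inner_ge:
  fixes d :: "'a::euclidean_space \<Rightarrow> real"
  assumes dgf: "dist_gen_fun N Q d d'" and "closed Q" "convex Q"
    and s: "s \<in> subdiff_on Q d z" and zQ: "z \<in> Q" and yQ: "y \<in> Q"
  shows "s \<bullet> (y - z) \<le> d' z \<bullet> (y - z)"
proof -
  have "strongly_convex_1 N Q d" using dgf by (simp add: dist_gen_fun_def)
  then have conv: "convex_on Q d" using \<open>convex Q\<close> by (rule strongly_convex_1_imp_convex_on)
  have cont: "continuous_on Q d" and nonneg: "\<And>x. x \<in> Q \<Longrightarrow> 0 \<le> d x"
    and sel: "\<And>w. w \<in> subdiff_dom Q d \<Longrightarrow> d' w \<in> subdiff_on Q d w"
    and cont': "continuous_on (subdiff_dom Q d) d'"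
    using dgf by (auto simp: dist_gen_fun_def)
  obtain w t where w: "\<And>n. w n \<in> subdiff_dom Q d" and t: "\<And>n. 0 < t n" "t \<longlonglongrightarrow> 0"
    and q: "(\<lambda>n. inverse (t n) *\<^sub>R (w n - z)) \<longlonglongrightarrow> y - z"
    using subdiff_dom_tangent_sequence[OF \<open>closed Q\<close> conv cont nonneg zQ yQ] by blast
  have "(\<lambda>n. z + t n *\<^sub>R (inverse (t n) *\<^sub>R (w n - z))) \<longlonglongrightarrow> z + 0 *\<^sub>R (y - z)"
    by (intro tendsto_intros t(2) q)
  then have "w \<longlonglongrightarrow> z" using t(1) by (simp add: less_imp_neq[symmetric])
  then have "(\<lambda>n. d' (w n)) \<longlonglongrightarrow> d' z"
    using w zQ s by (intro continuous_on_tendsto_compose[OF cont']) (auto simp: subdiff_dom_def)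
  then have "(\<lambda>n. (d' (w n) - s) \<bullet> (inverse (t n) *\<^sub>R (w n - z))) \<longlonglongrightarrow> (d' z - s) \<bullet> (y - z)"
    by (intro tendsto_intros q)
  moreover have "0 \<le> (d' (w n) - s) \<bullet> (inverse (t n) *\<^sub>R (w n - z))" for n
    using subdiff_on_monotone[OF s sel[OF w] zQ] w[of n] t(1)[of n] by (simp add: subdiff_dom_def)
  ultimately have "0 \<le> (d' z - s) \<bullet> (y - z)" by (blast intro: LIMSEQ_le_const)
  then show ?thesis by (simp add: inner_diff_left)
qed

text \<open>Optimality of \<open>z\<close> yields the subgradient \<open>-a/L\<close>, but the Bregman distance is built from
  \<open>d' z\<close>; \<open>dist_gen_fun_selection_inner_ge\<close> reconciles the two.\<close>
lemma prox_three_point: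
  fixes d :: "'a::euclidean_space \<Rightarrow> real"
  assumes dgf: "dist_gen_fun N Q d d'" and n: "is_norm N" and "closed Q" "convex Q"
    and L: "0 < L"
    and affine: "\<And>y. l y = l z + a \<bullet> (y - z)"
    and zmin: "is_arg_min (\<lambda>y. l y + L * d y) (\<lambda>y. y \<in> Q) z"
    and prox: "is_prox Q d d' z ((c / L) *\<^sub>R v) p"
    and yQ: "y \<in> Q"
  shows "l z + L * d z + c * (v \<bullet> (p - z)) + L / 2 * (N (z - p))\<^sup>2
         \<le> l y + L * d y + c * (v \<bullet> (y - z))"
proof -
  have zQ: "z \<in> Q" and zle: "\<And>w. w \<in> Q \<Longrightarrow> l z + L * d z \<le> l w + L * d w"
    using zmin by (auto simp: is_arg_min_linorder)
  have pQ: "p \<in> Q" and ple: "((c / L) *\<^sub>R v) \<bullet> (p - z) + bregman d d' z p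
      \<le> ((c / L) *\<^sub>R v) \<bullet> (y - z) + bregman d d' z y"
    using prox yQ by (auto simp: is_prox_def is_arg_min_linorder)
  have s: "- (1 / L) *\<^sub>R a \<in> subdiff_on Q d z"
    unfolding subdiff_on_def
  proof (intro CollectI ballI)
    fix w assume "w \<in> Q"
    then have "L * d z \<le> L * (d w + (1 / L) * (a \<bullet> (w - z)))"
      using zle[of w] affine[of w] L by (simp add: algebra_simps)
    then show "d z + - (1 / L) *\<^sub>R a \<bullet> (w - z) \<le> d w" using L by simp
  qed
  have sc: "strongly_convex_1 N Q d" and sel: "d' z \<in> subdiff_on Q d z"
    using dgf zQ s by (auto simp: dist_gen_fun_def subdiff_dom_def)
  have "- (1 / L) * (a \<bullet> (y - z)) \<le> d' z \<bullet> (y - z)"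
    using dist_gen_fun_selection_inner_ge[OF dgf \<open>closed Q\<close> \<open>convex Q\<close> s zQ yQ] by simp
  then have opt: "0 \<le> L * (d' z \<bullet> (y - z)) + a \<bullet> (y - z)"
    using L by (simp add: field_simps)
  have "1/2 * (N (p - z))\<^sup>2 \<le> bregman d d' z p"
    using strongly_convex_1_subgradient_growth[OF sc \<open>convex Q\<close> sel zQ pQ] by (simp add: bregman_def)
  then have "L / 2 * (N (z - p))\<^sup>2 \<le> L * bregman d d' z p"
    using L is_norm_minus_commute[OF n, of z p] by (simp add: mult_left_mono)
  moreover have "c * (v \<bullet> (p - z)) + L * bregman d d' z p \<le> c * (v \<bullet> (y - z)) + L * bregman d d' z y"
    using mult_left_mono[OF ple, of L] L by (simp add: algebra_simps)
  ultimately show ?thesis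
    using affine[of y] opt by (simp add: bregman_def algebra_simps)
qed

lemma lin_model_affine:
  "lin_model f g \<gamma> x t y = lin_model f g \<gamma> x t z + (\<Sum>k\<le>t. \<gamma> k *\<^sub>R g (x k)) \<bullet> (y - z)"
proof -
  have "lin_model f g \<gamma> x t y = (\<Sum>k\<le>t. \<gamma> k * (f (x k) + g (x k) \<bullet> (z - x k)) + \<gamma> k * (g (x k) \<bullet> (y - z)))"
    unfolding lin_model_def by (intro sum.cong refl) (simp add: algebra_simps inner_diff_right)
  then show ?thesis by (simp add: lin_model_def sum.distrib inner_sum_left)
qed

lemma lin_model_0: "lin_model f g \<gamma> x 0 y = \<gamma> 0 * (f (x 0) + g (x 0) \<bullet> (y - x 0))"
  by (simp add: lin_model_def)

lemma lin_model_Suc: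
  "lin_model f g \<gamma> x (Suc t) y
     = lin_model f g \<gamma> x t y + \<gamma> (Suc t) * (f (x (Suc t)) + g (x (Suc t)) \<bullet> (y - x (Suc t)))"
  by (simp add: lin_model_def)

locale accelerated_dual_averaging =
  fixes N :: "'a::euclidean_space \<Rightarrow> real" and Q :: "'a set"
    and f :: "'a \<Rightarrow> real" and g :: "'a \<Rightarrow> 'a" and Lf :: real
    and d :: "'a \<Rightarrow> real" and d' :: "'a \<Rightarrow> 'a"
    and T :: nat and \<gamma> Lt :: "nat \<Rightarrow> real" and x u z xh :: "nat \<Rightarrow> 'a"
    and \<Gamma> \<tau> :: "nat \<Rightarrow> real"
  assumes \<Gamma>_def: "\<Gamma> = (\<lambda>t. \<Sum>k\<le>t. \<gamma> k)"
    and \<tau>_def: "\<tau> = (\<lambda>t. \<gamma> (Suc t) / \<Gamma> (Suc t))"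
    and norm: "is_norm N"
    and Q: "closed Q" "convex Q"
    and f_conv: "convex_on UNIV f"
    and f_grad: "\<And>y. (f has_derivative (\<lambda>h. g y \<bullet> h)) (at y)"
    and L_pos: "Lf > 0"
    and L_lip: "\<And>y w. y \<in> Q \<Longrightarrow> w \<in> Q \<Longrightarrow> dual_norm N (g y - g w) \<le> Lf * N (y - w)"
    and dgf: "dist_gen_fun N Q d d'"
    and center: "is_arg_min d (\<lambda>y. y \<in> Q) (x 0)" and center0: "d (x 0) = 0"
    and \<gamma>0: "0 < \<gamma> 0" "\<gamma> 0 \<le> 1"
    and \<gamma>_nonneg: "\<And>t. t \<le> Suc T \<Longrightarrow> 0 \<le> \<gamma> t"
    and \<gamma>_sq: "\<And>t. t \<le> Suc T \<Longrightarrow> (\<gamma> t)\<^sup>2 \<le> \<Gamma> t"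
    and L0: "Lt 0 = Lf"
    and u0: "is_arg_min (\<lambda>y. \<gamma> 0 * (f (x 0) + g (x 0) \<bullet> (y - x 0)) + Lt 0 * d y) (\<lambda>y. y \<in> Q) (u 0)"
    and z0: "z 0 = u 0"
    and Lt_pos: "\<And>t. 1 \<le> t \<Longrightarrow> t \<le> T \<Longrightarrow> 0 < Lt t"
    and Lt_desc: "\<And>t. 1 \<le> t \<Longrightarrow> t \<le> T \<Longrightarrow>
        f (u t) \<le> f (x t) + g (x t) \<bullet> (u t - x t) + Lt t / 2 * (N (u t - x t))\<^sup>2"
    and zt: "\<And>t. 1 \<le> t \<Longrightarrow> t \<le> T \<Longrightarrow>
        is_arg_min (\<lambda>y. lin_model f g \<gamma> x t y + Lt t * d y) (\<lambda>y. y \<in> Q) (z t)"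
    and x_step: "\<And>t. t \<le> T \<Longrightarrow> x (Suc t) = \<tau> t *\<^sub>R z t + (1 - \<tau> t) *\<^sub>R u t"
    and xh_step: "\<And>t. t \<le> T \<Longrightarrow> is_prox Q d d' (z t) ((\<gamma> (Suc t) / Lt t) *\<^sub>R g (x (Suc t))) (xh (Suc t))"
    and u_step: "\<And>t. t \<le> T \<Longrightarrow> u (Suc t) = \<tau> t *\<^sub>R xh (Suc t) + (1 - \<tau> t) *\<^sub>R u t"
begin

text \<open>\<open>\<psi> t\<close> is the function whose minimum over \<open>Q\<close> is the paper's \<open>\<psi>\<^sub>t\<close>.\<close>
definition \<psi> :: "nat \<Rightarrow> 'a \<Rightarrow> real" where
  "\<psi> t y = lin_model f g \<gamma> x t y + Lt t * d y"

lemma Lt_pos_le: "t \<le> T \<Longrightarrow> 0 < Lt t"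
  using Lt_pos[of t] L0 L_pos by (cases t) auto

lemma Gamma_Suc: "\<Gamma> (Suc t) = \<Gamma> t + \<gamma> (Suc t)"
  by (simp add: \<Gamma>_def)

lemma Gamma_pos: "t \<le> Suc T \<Longrightarrow> 0 < \<Gamma> t"
  using member_le_sum[of 0 "{..t}" \<gamma>] \<gamma>_nonneg \<gamma>0 by (force simp: \<Gamma>_def)

lemma z_arg_min: "t \<le> T \<Longrightarrow> is_arg_min (\<psi> t) (\<lambda>y. y \<in> Q) (z t)"
  using zt[of t] u0 z0 by (cases t) (simp_all add: \<psi>_def[abs_def] lin_model_0)

lemma INF_\<psi>_eq: "t \<le> T \<Longrightarrow> (INF y\<in>Q. \<psi> t y) = \<psi> t (z t)"
  using z_arg_min[of t] by (intro cInf_eq_minimum) (auto simp: is_arg_min_linorder)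

lemma estimate_0: "\<Gamma> 0 * f (u 0) \<le> \<psi> 0 (z 0)"
proof -
  have x0Q: "x 0 \<in> Q" and x0min: "\<And>y. y \<in> Q \<Longrightarrow> d (x 0) \<le> d y" and u0Q: "u 0 \<in> Q"
    using center u0 by (auto simp: is_arg_min_linorder)
  have sc: "strongly_convex_1 N Q d" using dgf by (simp add: dist_gen_fun_def)
  have "0 \<in> subdiff_on Q d (x 0)" using x0min by (simp add: subdiff_on_def)
  from strongly_convex_1_subgradient_growth[OF sc Q(2) this x0Q u0Q]
  have "1/2 * (N (u 0 - x 0))\<^sup>2 \<le> d (u 0)" using center0 by simp
  then have "Lf / 2 * (N (u 0 - x 0))\<^sup>2 \<le> Lf * d (u 0)"
    using mult_left_mono[of _ _ Lf] L_pos by fastforce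
  moreover have "f (u 0) \<le> f (x 0) + g (x 0) \<bullet> (u 0 - x 0) + Lf / 2 * (N (u 0 - x 0))\<^sup>2"
    by (rule lipschitz_gradient_upper_bound[OF norm Q(2) f_grad L_lip x0Q u0Q])
  then have "\<gamma> 0 * f (u 0)
      \<le> \<gamma> 0 * (f (x 0) + g (x 0) \<bullet> (u 0 - x 0) + Lf / 2 * (N (u 0 - x 0))\<^sup>2)"
    using \<gamma>0 by (simp add: mult_left_mono)
  then have "\<gamma> 0 * f (u 0)
      \<le> \<gamma> 0 * (f (x 0) + g (x 0) \<bullet> (u 0 - x 0)) + \<gamma> 0 * (Lf / 2 * (N (u 0 - x 0))\<^sup>2)"
    by (simp only: distrib_left)
  moreover have "\<gamma> 0 * (Lf / 2 * (N (u 0 - x 0))\<^sup>2) \<le> Lf / 2 * (N (u 0 - x 0))\<^sup>2"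
    using \<gamma>0 L_pos by (simp add: mult_left_le_one_le)
  ultimately have "\<gamma> 0 * f (u 0) \<le> \<gamma> 0 * (f (x 0) + g (x 0) \<bullet> (u 0 - x 0)) + Lf * d (u 0)"
    by linarith
  then show ?thesis by (simp add: \<Gamma>_def \<psi>_def lin_model_0 z0 L0)
qed

lemma descent_Suc:
  assumes "t < T"
  shows "\<Gamma> (Suc t) * f (u (Suc t)) \<le> \<Gamma> (Suc t) * f (x (Suc t))
      + \<gamma> (Suc t) * (g (x (Suc t)) \<bullet> (xh (Suc t) - z t)) + Lt (Suc t) / 2 * (N (z t - xh (Suc t)))\<^sup>2"
proof -
  let ?\<Gamma> = "\<Gamma> (Suc t)" and ?\<tau> = "\<tau> t" and ?D = "N (z t - xh (Suc t))"
  have \<Gamma>pos: "0 < ?\<Gamma>" using Gamma_pos[of "Suc t"] assms by simp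
  have \<tau>: "?\<Gamma> * ?\<tau> = \<gamma> (Suc t)" "0 \<le> ?\<tau>"
    using \<Gamma>pos \<gamma>_nonneg[of "Suc t"] assms by (simp_all add: \<tau>_def)
  have diff: "u (Suc t) - x (Suc t) = ?\<tau> *\<^sub>R (xh (Suc t) - z t)"
    using x_step[of t] u_step[of t] assms by (simp add: scaleR_diff_right)
  then have "N (u (Suc t) - x (Suc t)) = ?\<tau> * ?D"
    using is_norm_scaleR[OF norm] is_norm_minus_commute[OF norm, of "xh (Suc t)"] \<tau>(2) by simp
  moreover have "?\<Gamma> * ?\<tau>\<^sup>2 \<le> 1"
  proof -
    have "?\<Gamma> * ?\<tau>\<^sup>2 = (\<gamma> (Suc t))\<^sup>2 / ?\<Gamma>" using \<Gamma>pos \<tau>(1) by (simp add: field_simps power2_eq_square)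
    also have "\<dots> \<le> 1" using \<gamma>_sq[of "Suc t"] assms \<Gamma>pos by simp
    finally show ?thesis .
  qed
  moreover have "0 \<le> Lt (Suc t)" using Lt_pos_le[of "Suc t"] assms by simp
  ultimately have "?\<Gamma> * (Lt (Suc t) / 2 * (N (u (Suc t) - x (Suc t)))\<^sup>2) \<le> Lt (Suc t) / 2 * ?D\<^sup>2"
    using mult_right_mono[of "?\<Gamma> * ?\<tau>\<^sup>2" 1 "Lt (Suc t) / 2 * ?D\<^sup>2"]
    by (simp add: power_mult_distrib mult_ac)
  moreover have "?\<Gamma> * (g (x (Suc t)) \<bullet> (u (Suc t) - x (Suc t)))
      = \<gamma> (Suc t) * (g (x (Suc t)) \<bullet> (xh (Suc t) - z t))"
    unfolding diff by (simp add: \<tau>(1)[symmetric] mult.assoc)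
  moreover have "f (u (Suc t)) \<le> f (x (Suc t)) + g (x (Suc t)) \<bullet> (u (Suc t) - x (Suc t))
      + Lt (Suc t) / 2 * (N (u (Suc t) - x (Suc t)))\<^sup>2"
    using Lt_desc[of "Suc t"] assms by simp
  then have "?\<Gamma> * f (u (Suc t)) \<le> ?\<Gamma> * (f (x (Suc t))
      + g (x (Suc t)) \<bullet> (u (Suc t) - x (Suc t)) + Lt (Suc t) / 2 * (N (u (Suc t) - x (Suc t)))\<^sup>2)"
    using \<Gamma>pos by (simp add: mult_left_mono)
  then have "?\<Gamma> * f (u (Suc t))
      \<le> ?\<Gamma> * f (x (Suc t)) + ?\<Gamma> * (g (x (Suc t)) \<bullet> (u (Suc t) - x (Suc t)))
        + ?\<Gamma> * (Lt (Suc t) / 2 * (N (u (Suc t) - x (Suc t)))\<^sup>2)"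
    by (simp only: distrib_left)
  ultimately show ?thesis by linarith
qed

lemma convexity_Suc:
  assumes "t \<le> T"
  shows "\<Gamma> t * f (x (Suc t)) \<le> \<Gamma> t * f (u t) + \<gamma> (Suc t) * (g (x (Suc t)) \<bullet> (z t - x (Suc t)))"
proof -
  have \<Gamma>pos: "0 < \<Gamma> (Suc t)" using Gamma_pos[of "Suc t"] assms by simp
  have "\<Gamma> (Suc t) *\<^sub>R x (Suc t)
      = (\<Gamma> (Suc t) * \<tau> t) *\<^sub>R z t + (\<Gamma> (Suc t) - \<Gamma> (Suc t) * \<tau> t) *\<^sub>R u t"
    unfolding x_step[OF assms] by (simp add: algebra_simps)
  also have "\<dots> = \<gamma> (Suc t) *\<^sub>R z t + \<Gamma> t *\<^sub>R u t"
    using \<Gamma>pos by (simp add: \<tau>_def Gamma_Suc)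
  finally have "\<Gamma> (Suc t) *\<^sub>R x (Suc t) = \<gamma> (Suc t) *\<^sub>R z t + \<Gamma> t *\<^sub>R u t" .
  then have "\<Gamma> t *\<^sub>R (u t - x (Suc t)) = - (\<gamma> (Suc t) *\<^sub>R (z t - x (Suc t)))"
    by (simp add: Gamma_Suc algebra_simps)
  then have "\<Gamma> t * (g (x (Suc t)) \<bullet> (u t - x (Suc t))) = - (\<gamma> (Suc t) * (g (x (Suc t)) \<bullet> (z t - x (Suc t))))"
    by (metis inner_scaleR_right inner_minus_right)
  moreover have "\<Gamma> t * (f (x (Suc t)) + g (x (Suc t)) \<bullet> (u t - x (Suc t))) \<le> \<Gamma> t * f (u t)"
    using convex_on_gradient_le[OF f_conv f_grad] Gamma_pos[of t] assms by (simp add: mult_left_mono)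
  ultimately show ?thesis by (simp add: algebra_simps)
qed

lemma \<psi>_Suc_ge:
  assumes "t < T"
  shows "\<psi> t (z t) + \<gamma> (Suc t) * (f (x (Suc t)) + g (x (Suc t)) \<bullet> (xh (Suc t) - x (Suc t)))
      + Lt t / 2 * (N (z t - xh (Suc t)))\<^sup>2 + (Lt (Suc t) - Lt t) * d (z (Suc t))
    \<le> \<psi> (Suc t) (z (Suc t))"
proof -
  have "z (Suc t) \<in> Q" using z_arg_min[of "Suc t"] assms by (simp add: is_arg_min_linorder)
  then have "lin_model f g \<gamma> x t (z t) + Lt t * d (z t)
      + \<gamma> (Suc t) * (g (x (Suc t)) \<bullet> (xh (Suc t) - z t)) + Lt t / 2 * (N (z t - xh (Suc t)))\<^sup>2
    \<le> lin_model f g \<gamma> x t (z (Suc t)) + Lt t * d (z (Suc t))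
      + \<gamma> (Suc t) * (g (x (Suc t)) \<bullet> (z (Suc t) - z t))"
    using z_arg_min[of t] xh_step[of t] assms Lt_pos_le[of t]
    by (intro prox_three_point[OF dgf norm Q _ lin_model_affine]) (auto simp: \<psi>_def[abs_def])
  then show ?thesis
    by (simp add: \<psi>_def lin_model_Suc inner_diff_right algebra_simps)
qed

lemma f_u_Suc_le:
  assumes "t < T"
  shows "\<Gamma> (Suc t) * f (u (Suc t)) \<le> \<Gamma> t * f (u t)
      + \<gamma> (Suc t) * (f (x (Suc t)) + g (x (Suc t)) \<bullet> (xh (Suc t) - x (Suc t)))
      + Lt (Suc t) / 2 * (N (z t - xh (Suc t)))\<^sup>2"
proof -
  have "\<gamma> (Suc t) * (f (x (Suc t)) + g (x (Suc t)) \<bullet> (xh (Suc t) - x (Suc t)))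
      = \<gamma> (Suc t) * f (x (Suc t)) + \<gamma> (Suc t) * (g (x (Suc t)) \<bullet> (xh (Suc t) - z t))
        + \<gamma> (Suc t) * (g (x (Suc t)) \<bullet> (z t - x (Suc t)))"
    by (simp add: inner_diff_right algebra_simps)
  moreover have "\<Gamma> (Suc t) * f (x (Suc t)) = \<Gamma> t * f (x (Suc t)) + \<gamma> (Suc t) * f (x (Suc t))"
    by (simp add: Gamma_Suc algebra_simps)
  ultimately show ?thesis
    using descent_Suc[OF assms] convexity_Suc[OF less_imp_le[OF assms]] by linarith
qed

definition correction :: "nat \<Rightarrow> real" where
  "correction t = (\<Sum>k<t. (Lt (Suc k) - Lt k) * (d (z (Suc k)) - 1/2 * (N (z k - xh (Suc k)))\<^sup>2))"

lemma correction_Suc: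
  "correction (Suc t) = correction t + (Lt (Suc t) - Lt t) * d (z (Suc t))
      + Lt t / 2 * (N (z t - xh (Suc t)))\<^sup>2 - Lt (Suc t) / 2 * (N (z t - xh (Suc t)))\<^sup>2"
  by (simp add: correction_def field_simps)

lemma estimate: "t \<le> T \<Longrightarrow> \<Gamma> t * f (u t) + correction t \<le> \<psi> t (z t)"
proof (induction t)
  case 0
  then show ?case using estimate_0 by (simp add: correction_def)
next
  case (Suc t)
  then have "t < T" by simp
  let ?X = "x (Suc t)"
  have "\<Gamma> (Suc t) * f (u (Suc t)) + correction (Suc t)
      \<le> (\<Gamma> t * f (u t) + correction t) + \<gamma> (Suc t) * (f ?X + g ?X \<bullet> (xh (Suc t) - ?X))
        + Lt t / 2 * (N (z t - xh (Suc t)))\<^sup>2 + (Lt (Suc t) - Lt t) * d (z (Suc t))"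
    using f_u_Suc_le[OF \<open>t < T\<close>] unfolding correction_Suc by linarith
  also have "\<dots> \<le> \<psi> (Suc t) (z (Suc t))"
    using Suc.IH \<open>t < T\<close> \<psi>_Suc_ge[OF \<open>t < T\<close>] by simp
  finally show ?case .
qed

end

theorem theorem1:
  fixes N :: "real^'n \<Rightarrow> real"
    and Q :: "(real^'n) set"
    and f :: "real^'n \<Rightarrow> real" and g :: "real^'n \<Rightarrow> real^'n"
    and Lf :: real
    and d :: "real^'n \<Rightarrow> real" and d' :: "real^'n \<Rightarrow> real^'n"
    and T :: nat
    and \<gamma> :: "nat \<Rightarrow> real" and Lt :: "nat \<Rightarrow> real"
    and x u z xh :: "nat \<Rightarrow> real^'n"
  defines "\<Gamma> \<equiv> (\<lambda>t. \<Sum>k\<le>t. \<gamma> k)"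
  defines "\<tau> \<equiv> (\<lambda>t. \<gamma> (Suc t) / \<Gamma> (Suc t))"
  assumes norm: "is_norm N"
    and Q: "closed Q" "convex Q"
    and f_conv: "convex_on UNIV f"
    and f_grad: "\<And>y. (f has_derivative (\<lambda>h. g y \<bullet> h)) (at y)"
    and f_min: "\<exists>y\<in>Q. \<forall>w\<in>Q. f y \<le> f w"
    and L_pos: "Lf > 0"
    and L_lip: "\<And>y w. y \<in> Q \<Longrightarrow> w \<in> Q \<Longrightarrow> dual_norm N (g y - g w) \<le> Lf * N (y - w)"
    and dgf: "dist_gen_fun N Q d d'"
    and center: "is_arg_min d (\<lambda>y. y \<in> Q) (x 0)" and center0: "d (x 0) = 0"
    and \<gamma>0: "0 < \<gamma> 0" "\<gamma> 0 \<le> 1"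
    and \<gamma>_nonneg: "\<And>t. t \<le> Suc T \<Longrightarrow> 0 \<le> \<gamma> t"
    and \<gamma>_sq: "\<And>t. t \<le> Suc T \<Longrightarrow> (\<gamma> t)\<^sup>2 \<le> \<Gamma> t"
    and L0: "Lt 0 = Lf"
    and u0: "is_arg_min (\<lambda>y. \<gamma> 0 * (f (x 0) + g (x 0) \<bullet> (y - x 0)) + Lt 0 * d y) (\<lambda>y. y \<in> Q) (u 0)"
    and z0: "z 0 = u 0"
    and Lt_bd: "\<And>t. 1 \<le> t \<Longrightarrow> t \<le> T \<Longrightarrow> 0 < Lt t \<and> Lt t \<le> Lf"
    and Lt_desc: "\<And>t. 1 \<le> t \<Longrightarrow> t \<le> T \<Longrightarrow>
        f (u t) \<le> f (x t) + g (x t) \<bullet> (u t - x t) + Lt t / 2 * (N (u t - x t))\<^sup>2"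
    and zt: "\<And>t. 1 \<le> t \<Longrightarrow> t \<le> T \<Longrightarrow>
        is_arg_min (\<lambda>y. lin_model f g \<gamma> x t y + Lt t * d y) (\<lambda>y. y \<in> Q) (z t)"
    and x_step: "\<And>t. t \<le> T \<Longrightarrow> x (Suc t) = \<tau> t *\<^sub>R z t + (1 - \<tau> t) *\<^sub>R u t"
    and xh_step: "\<And>t. t \<le> T \<Longrightarrow> is_prox Q d d' (z t) ((\<gamma> (Suc t) / Lt t) *\<^sub>R g (x (Suc t))) (xh (Suc t))"
    and u_step: "\<And>t. t \<le> T \<Longrightarrow> u (Suc t) = \<tau> t *\<^sub>R xh (Suc t) + (1 - \<tau> t) *\<^sub>R u t"
  shows "\<forall>t\<le>T. \<Gamma> t * f (u t)
           + (\<Sum>k<t. (Lt (Suc k) - Lt k) * (d (z (Suc k)) - 1/2 * (N (z k - xh (Suc k)))\<^sup>2))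
         \<le> (INF y\<in>Q. lin_model f g \<gamma> x t y + Lt t * d y)"
proof -
  interpret accelerated_dual_averaging N Q f g Lf d d' T \<gamma> Lt x u z xh \<Gamma> \<tau>
    by unfold_locales
      (fact norm Q f_conv f_grad L_pos L_lip dgf center center0 \<gamma>0 \<gamma>_nonneg \<gamma>_sq L0 u0 z0
        Lt_desc zt x_step xh_step u_step | simp add: \<Gamma>_def \<tau>_def Lt_bd)+
  show ?thesis
    using estimate INF_\<psi>_eq unfolding correction_def \<psi>_def by auto
qed

end
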